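(* Let $\alpha\colon\Gamma\curvearrowright X$ be an action of a countable group on a compact, Hausdorff, $0$-dimensional space. The natural semigroup homomorphism $\pi\colon T(\alpha)\to H(\alpha)$ is injective if and only if $T(\alpha)$ is cancellative.
   Context: Clopen type semigroup: let $Y = X\times\mathbb N$, and let $\tilde\Gamma=\Gamma\times\mathfrak S$ ($\mathfrak S$ the permutation group of $\mathbb N$) act on $Y$ by $(\gamma,\sigma)(x,n)=(\alpha(\gamma)x,\sigma(n))$. A clopen $A\subseteq Y$ is bounded if $A\cap(X\times\{n\})=\emptyset$ for all large $n$. Bounded clopen $A,B$ are equidecomposable if there are clopen $A_1,\dots,A_n$ and $\tilde\gamma_i\in\tilde\Gamma$ with $A=\bigsqcup_i A_i$, $B=\bigsqcup_i\tilde\gamma_iA_i$. $T(\alpha)$ is the set of classes $[A]$, with $[A]+[B]=[A'\sqcup B']$ for disjoint representatives. Cancellative: $a+b=a+c\Rightarrow b=c$. The $0$-homology group is $H(\alpha)=C(X,\mathbb Z)/\langle f-f\circ\alpha(\gamma): f\in C(X,\mathbb Z),\gamma\in\Gamma\rangle$. The map $\pi$ sends $[A]$, for a bounded clopen $A=\bigsqcup_i A_i\times\{i\}$, to the class in $H(\alpha)$ of $\sum_i \mathbf 1_{A_i}$ (this is a well-defined monoid homomorphism onto the image of $C(X,\mathbb N)$). *)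

theory Defs
  imports "HOL-Analysis.Analysis"
begin

text \<open>Y = X \<times> nat with the product topology (nat discrete).
  The group \<Gamma> is a (not necessarily abelian) group written additively (class group_add).\<close>

definition clopen_set :: "'a::topological_space set \<Rightarrow> bool" where
  "clopen_set A \<longleftrightarrow> open A \<and> closed A"

definition bounded_clopen :: "('x::topological_space \<times> nat) set \<Rightarrow> bool" where
  "bounded_clopen A \<longleftrightarrow> clopen_set A \<and> (\<exists>N. \<forall>x n. (x, n) \<in> A \<longrightarrow> n < N)"

definition tact :: "('g \<Rightarrow> 'x \<Rightarrow> 'x) \<Rightarrow> 'g \<Rightarrow> (nat \<Rightarrow> nat) \<Rightarrow> ('x \<times> nat) set \<Rightarrow> ('x \<times> nat) set" where
  "tact \<alpha> g \<sigma> A = (\<lambda>(x, k). (\<alpha> g x, \<sigma> k)) ` A"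

definition equidec :: "('g \<Rightarrow> 'x::topological_space \<Rightarrow> 'x) \<Rightarrow> ('x \<times> nat) set \<Rightarrow> ('x \<times> nat) set \<Rightarrow> bool" where
  "equidec \<alpha> A B \<longleftrightarrow>
     (\<exists>(n::nat) (P :: nat \<Rightarrow> ('x \<times> nat) set) (g :: nat \<Rightarrow> 'g) (s :: nat \<Rightarrow> nat \<Rightarrow> nat).
        (\<forall>i<n. clopen_set (P i) \<and> bij (s i)) \<and>
        disjoint_family_on P {..<n} \<and> A = (\<Union>i<n. P i) \<and>
        disjoint_family_on (\<lambda>i. tact \<alpha> (g i) (s i) (P i)) {..<n} \<and>
        B = (\<Union>i<n. tact \<alpha> (g i) (s i) (P i)))"

definition Teq :: "('g \<Rightarrow> 'x::topological_space \<Rightarrow> 'x) \<Rightarrow> (('x \<times> nat) set \<times> ('x \<times> nat) set) set" where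
  "Teq \<alpha> = {(A, B). bounded_clopen A \<and> bounded_clopen B \<and> equidec \<alpha> A B}"

definition Tsg :: "('g \<Rightarrow> 'x::topological_space \<Rightarrow> 'x) \<Rightarrow> ('x \<times> nat) set set set" where
  "Tsg \<alpha> = {A. bounded_clopen A} // Teq \<alpha>"

definition Tplus :: "('g \<Rightarrow> 'x::topological_space \<Rightarrow> 'x) \<Rightarrow> ('x \<times> nat) set set \<Rightarrow> ('x \<times> nat) set set \<Rightarrow> ('x \<times> nat) set set" where
  "Tplus \<alpha> a b = {D. \<exists>A\<in>a. \<exists>B\<in>b. A \<inter> B = {} \<and> (A \<union> B, D) \<in> Teq \<alpha>}"

definition T_cancellative :: "('g \<Rightarrow> 'x::topological_space \<Rightarrow> 'x) \<Rightarrow> bool" where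
  "T_cancellative \<alpha> \<longleftrightarrow>
     (\<forall>a\<in>Tsg \<alpha>. \<forall>b\<in>Tsg \<alpha>. \<forall>c\<in>Tsg \<alpha>. Tplus \<alpha> a b = Tplus \<alpha> a c \<longrightarrow> b = c)"

text \<open>Coboundary subgroup of C(X,\<int>): generated by f - f \<circ> \<alpha>(\<gamma>); its elements are finite sums
  of such generators (negatives are absorbed by replacing f with -f).\<close>
definition coboundaries :: "('g \<Rightarrow> 'x::topological_space \<Rightarrow> 'x) \<Rightarrow> ('x \<Rightarrow> int) set" where
  "coboundaries \<alpha> = {h. \<exists>(n::nat) (f :: nat \<Rightarrow> 'x \<Rightarrow> int) (g :: nat \<Rightarrow> 'g).
      (\<forall>i<n. continuous_on UNIV (f i)) \<and>
      h = (\<lambda>x. \<Sum>i<n. f i x - f i (\<alpha> (g i) x))}"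

text \<open>For A = \<Union> A_i \<times> {i}, the function \<Sum>_i 1_{A_i} (representative of \<pi>([A])).\<close>
definition count_fn :: "('x \<times> nat) set \<Rightarrow> 'x \<Rightarrow> int" where
  "count_fn A x = int (card {n. (x, n) \<in> A})"

text \<open>\<pi>([A]) = \<pi>([B]) in H(\<alpha>) iff the difference of representatives is a coboundary.\<close>
definition pi_injective :: "('g \<Rightarrow> 'x::topological_space \<Rightarrow> 'x) \<Rightarrow> bool" where
  "pi_injective \<alpha> \<longleftrightarrow>
     (\<forall>A B. bounded_clopen A \<longrightarrow> bounded_clopen B \<longrightarrow>
        (\<lambda>x. count_fn A x - count_fn B x) \<in> coboundaries \<alpha> \<longrightarrow> equidec \<alpha> A B)"

end

theory Submission
  imports Defs
begin

(*
  Write \<pi>(A) for the counting function x \<mapsto> #{n. (x, n) \<in> A} of a bounded clopen set A.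
  Equidecomposable sets have counting functions differing by a coboundary, and sets with the
  same counting function are equidecomposable: on the clopen set of points whose fibre is S,
  a permutation of \<nat> moves S onto {..<card S}. Hence T(\<alpha>) is cancellative iff
  A \<union> B ~ A \<union> C implies B ~ C for disjoint unions, and injectivity of \<pi> gives this because
  \<pi>(A \<union> B) - \<pi>(A \<union> C) = \<pi>(B) - \<pi>(C).

  Conversely, every coboundary \<Sum> f\<^sub>i - f\<^sub>i \<circ> \<alpha>(\<gamma>\<^sub>i) is \<pi>(Q) - \<pi>(R) for some Q ~ R lying above
  any prescribed level: stack the sets {(x, n). n < f\<^sub>i x + K} (compactness bounds f\<^sub>i) and
  their images under \<alpha>(-\<gamma>\<^sub>i). If \<pi>(A) - \<pi>(B) is that coboundary, then \<pi>(R \<union> A) = \<pi>(Q \<union> B),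
  so R \<union> A ~ Q \<union> B ~ R \<union> B, and cancelling R gives A ~ B.
*)

section \<open>Clopen sets\<close>

lemma clopen_set_Int: "clopen_set A \<Longrightarrow> clopen_set B \<Longrightarrow> clopen_set (A \<inter> B)"
  unfolding clopen_set_def by auto

lemma clopen_set_Un: "clopen_set A \<Longrightarrow> clopen_set B \<Longrightarrow> clopen_set (A \<union> B)"
  unfolding clopen_set_def by auto

lemma clopen_set_Compl: "clopen_set A \<Longrightarrow> clopen_set (- A)"
  unfolding clopen_set_def by (simp add: open_Compl closed_Compl)

lemma clopen_set_INT:
  "finite I \<Longrightarrow> (\<And>i. i \<in> I \<Longrightarrow> clopen_set (P i)) \<Longrightarrow> clopen_set (\<Inter>i\<in>I. P i)"
  unfolding clopen_set_def by (auto intro: open_INT)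

lemma clopen_set_discrete: "clopen_set (S :: 'a::discrete_topology set)"
  unfolding clopen_set_def by (simp add: open_discrete closed_open)

lemma clopen_set_vimage: "continuous_on UNIV f \<Longrightarrow> clopen_set S \<Longrightarrow> clopen_set (f -` S)"
  unfolding clopen_set_def by (auto intro: open_vimage closed_vimage)

lemma clopen_set_Times_discrete:
  "clopen_set E \<Longrightarrow> clopen_set (E \<times> (K :: 'b::discrete_topology set))"
  unfolding clopen_set_def using clopen_set_discrete[of K, unfolded clopen_set_def]
  by (auto intro: open_Times closed_Times)

lemma clopen_set_levels_iff:
  "clopen_set (S :: ('x::topological_space \<times> nat) set) \<longleftrightarrow> (\<forall>n. clopen_set {x. (x, n) \<in> S})"
proof
  assume "clopen_set S"
  then show "\<forall>n. clopen_set {x. (x, n) \<in> S}"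
  proof (intro allI)
    fix n
    have "{x. (x, n) \<in> S} = (\<lambda>x. (x, n)) -` S" by auto
    then show "clopen_set {x. (x, n) \<in> S}"
      using \<open>clopen_set S\<close> by (simp add: clopen_set_vimage continuous_on_Pair)
  qed
next
  assume levels: "\<forall>n. clopen_set {x. (x, n) \<in> S}"
  have open_UN_levels: "open (\<Union>n. E n \<times> {n})" if "\<And>n. clopen_set (E n)" for E :: "nat \<Rightarrow> 'x set"
    using that clopen_set_Times_discrete unfolding clopen_set_def by (intro open_UN) blast
  have "S = (\<Union>n. {x. (x, n) \<in> S} \<times> {n})" "- S = (\<Union>n. (- {x. (x, n) \<in> S}) \<times> {n})"
    by auto
  moreover have "open (\<Union>n. {x. (x, n) \<in> S} \<times> {n})" "open (\<Union>n. (- {x. (x, n) \<in> S}) \<times> {n})"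
    using levels by (simp_all add: open_UN_levels clopen_set_Compl)
  ultimately have "open S" "open (- S)"
    by simp_all
  then show "clopen_set S"
    unfolding clopen_set_def by (simp add: closed_def)
qed

lemma continuous_on_of_bool_clopen:
  assumes "clopen_set U"
  shows "continuous_on UNIV (\<lambda>x. of_bool (x \<in> U) :: int)"
proof -
  have "continuous_on (U \<union> - U) (\<lambda>x. if x \<in> U then 1 else 0 :: int)"
    using assms unfolding clopen_set_def by (intro continuous_on_cases) (auto simp: closed_Compl)
  then show ?thesis by (simp add: of_bool_def)
qed

lemma finite_range_continuous_int:
  assumes "compact (UNIV :: 'x::topological_space set)" "continuous_on UNIV (f :: 'x \<Rightarrow> int)"
  shows "finite (range f)"
proof -
  have "compact (range f)"
    using assms compact_continuous_image by blast
  then obtain T where "T \<subseteq> range f" "finite T" "range f \<subseteq> (\<Union>y\<in>T. {y})"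
    by (rule compactE_image[of "range f" "range f" "\<lambda>y. {y}"]) (auto simp: open_discrete)
  then show ?thesis
    by (metis UN_singleton finite_subset)
qed

section \<open>Levels and counting functions\<close>

lemma ex_bij_image_eq:
  assumes "finite S" "finite T" "card S = card T"
  obtains \<sigma> :: "'a \<Rightarrow> 'a" where "bij \<sigma>" "\<sigma> ` S = T"
proof -
  define U where "U = S \<union> T"
  have "finite U" "card (U - S) = card (U - T)"
    using assms by (simp_all add: U_def card_Diff_subset)
  then obtain h k where h: "bij_betw h S T" and k: "bij_betw k (U - S) (U - T)"
    using assms finite_same_card_bij by (metis finite_Diff)
  define \<sigma> where "\<sigma> x = (if x \<in> S then h x else if x \<in> U - S then k x else x)" for x
  have "bij_betw \<sigma> (S \<union> ((U - S) \<union> - U)) (T \<union> ((U - T) \<union> - U))"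
    unfolding \<sigma>_def by (intro bij_betw_disjoint_Un h k) (auto simp: U_def bij_betw_def)
  moreover have "S \<union> ((U - S) \<union> - U) = UNIV" "T \<union> ((U - T) \<union> - U) = UNIV"
    by (auto simp: U_def)
  ultimately have "bij \<sigma>"
    by simp
  moreover have "\<sigma> ` S = h ` S"
    by (simp add: \<sigma>_def)
  ultimately show ?thesis
    using that h by (simp add: bij_betw_def)
qed

lemma bounded_clopen_iff: "bounded_clopen A \<longleftrightarrow> clopen_set A \<and> finite (snd ` A)"
proof -
  have "(\<forall>x n. (x, n) \<in> A \<longrightarrow> n < N) \<longleftrightarrow> (\<forall>n\<in>snd ` A. n < N)" for N
    by force
  then show ?thesis
    by (simp add: bounded_clopen_def finite_nat_set_iff_bounded)
qed

lemma bounded_clopen_empty: "bounded_clopen {}"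
  by (simp add: bounded_clopen_def clopen_set_def)

lemma bounded_clopen_Un: "bounded_clopen A \<Longrightarrow> bounded_clopen B \<Longrightarrow> bounded_clopen (A \<union> B)"
  by (simp add: bounded_clopen_iff clopen_set_Un image_Un)

lemma disjoint_if_levels_separated:
  fixes A B :: "('x \<times> nat) set"
  shows "snd ` A \<subseteq> {..<N} \<Longrightarrow> snd ` B \<subseteq> {N..} \<Longrightarrow> A \<inter> B = {}"
  by (force simp: image_subset_iff)

lemma finite_level_set: "finite (snd ` A) \<Longrightarrow> finite {n. (x, n) \<in> A}"
  by (rule finite_subset[of _ "snd ` A"]) force

lemma count_fn_UN:
  assumes "finite I" "disjoint_family_on P I" "\<And>i. i \<in> I \<Longrightarrow> finite (snd ` P i)"
  shows "count_fn (\<Union>i\<in>I. P i) x = (\<Sum>i\<in>I. count_fn (P i) x)"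
proof -
  have "{n. (x, n) \<in> (\<Union>i\<in>I. P i)} = (\<Union>i\<in>I. {n. (x, n) \<in> P i})"
    by auto
  moreover have "card (\<Union>i\<in>I. {n. (x, n) \<in> P i}) = (\<Sum>i\<in>I. card {n. (x, n) \<in> P i})"
    using assms by (intro card_UN_disjoint) (auto simp: finite_level_set disjoint_family_on_def)
  ultimately show ?thesis
    by (simp add: count_fn_def)
qed

lemma count_fn_Un:
  assumes "A \<inter> B = {}" "finite (snd ` A)" "finite (snd ` B)"
  shows "count_fn (A \<union> B) x = count_fn A x + count_fn B x"
proof -
  have "{n. (x, n) \<in> A \<union> B} = {n. (x, n) \<in> A} \<union> {n. (x, n) \<in> B}"
    by auto
  then show ?thesis
    using assms by (simp add: count_fn_def card_Un_disjoint finite_level_set disjoint_iff)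
qed

lemma continuous_on_count_fn:
  assumes "clopen_set P" "finite (snd ` P)"
  shows "continuous_on UNIV (count_fn P)"
proof -
  have "count_fn P x = (\<Sum>k\<in>snd ` P. of_bool (x \<in> {x. (x, k) \<in> P}))" for x
  proof -
    have "{n. (x, n) \<in> P} = snd ` P \<inter> {k. x \<in> {x. (x, k) \<in> P}}"
      by force
    then show ?thesis
      using assms(2) by (simp add: count_fn_def)
  qed
  moreover have "continuous_on UNIV (\<lambda>x. \<Sum>k\<in>snd ` P. of_bool (x \<in> {x. (x, k) \<in> P}) :: int)"
    using assms(1) clopen_set_levels_iff
    by (intro continuous_on_sum continuous_on_of_bool_clopen) blast
  ultimately show ?thesis
    by simp
qed

definition staircase :: "('x \<Rightarrow> int) \<Rightarrow> ('x \<times> nat) set" where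
  "staircase c = {(x, n). int n < c x}"

lemma count_fn_staircase:
  assumes "0 \<le> c x"
  shows "count_fn (staircase c) x = c x"
proof -
  have "{n. (x, n) \<in> staircase c} = {..<nat (c x)}"
    by (auto simp: staircase_def)
  then show ?thesis
    using assms by (simp add: count_fn_def)
qed

lemma bounded_clopen_staircase:
  assumes "continuous_on UNIV c" "\<And>x. c x \<le> int N"
  shows "bounded_clopen (staircase c)"
proof -
  have "{x. (x, n) \<in> staircase c} = c -` {int n<..}" for n
    by (auto simp: staircase_def)
  then have "clopen_set (staircase c)"
    using assms(1) by (simp add: clopen_set_levels_iff clopen_set_vimage clopen_set_discrete)
  moreover have "snd ` staircase c \<subseteq> {..<N}"
  proof
    fix n assume "n \<in> snd ` staircase c"
    then obtain x where "int n < c x"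
      by (auto simp: staircase_def)
    then show "n \<in> {..<N}"
      using assms(2)[of x] by simp
  qed
  ultimately show ?thesis
    by (meson bounded_clopen_iff finite_lessThan finite_subset)
qed

section \<open>Equidecomposability\<close>

definition tact_map :: "('g \<Rightarrow> 'x \<Rightarrow> 'x) \<Rightarrow> 'g \<Rightarrow> (nat \<Rightarrow> nat) \<Rightarrow> 'x \<times> nat \<Rightarrow> 'x \<times> nat" where
  "tact_map \<alpha> g \<sigma> = (\<lambda>(x, k). (\<alpha> g x, \<sigma> k))"

lemma tact_map_apply [simp]: "tact_map \<alpha> g \<sigma> (x, k) = (\<alpha> g x, \<sigma> k)"
  by (simp add: tact_map_def)

lemma tact_eq_image: "tact \<alpha> g \<sigma> P = tact_map \<alpha> g \<sigma> ` P"
  by (simp add: tact_def tact_map_def)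

lemma snd_tact: "snd ` tact \<alpha> g \<sigma> P = \<sigma> ` snd ` P"
  by (force simp: tact_def)

lemma tact_Int_vimage: "tact \<alpha> g \<sigma> (P \<inter> tact_map \<alpha> g \<sigma> -` Q) = tact \<alpha> g \<sigma> P \<inter> Q"
  by (auto simp: tact_eq_image)

lemma disjoint_family_on_case_sum:
  assumes "disjoint_family_on P I" "disjoint_family_on Q J" "(\<Union>i\<in>I. P i) \<inter> (\<Union>j\<in>J. Q j) = {}"
  shows "disjoint_family_on (case_sum P Q) (I <+> J)"
  using assms unfolding disjoint_family_on_def by (auto simp: disjoint_iff) blast+

lemma disjoint_family_on_prodI:
  assumes "\<And>i j i' j'. i \<in> I \<Longrightarrow> i' \<in> I \<Longrightarrow> j \<in> J \<Longrightarrow> j' \<in> J \<Longrightarrow> (i, j) \<noteq> (i', j') \<Longrightarrow>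
    F (i, j) \<inter> F (i', j') = {}"
  shows "disjoint_family_on F (I \<times> J)"
  using assms unfolding disjoint_family_on_def by auto

lemma equidecI:
  assumes "finite I" "\<And>i. i \<in> I \<Longrightarrow> clopen_set (P i)" "\<And>i. i \<in> I \<Longrightarrow> bij (s i)"
    "disjoint_family_on P I" "disjoint_family_on (\<lambda>i. tact \<alpha> (g i) (s i) (P i)) I"
    "A = (\<Union>i\<in>I. P i)" "B = (\<Union>i\<in>I. tact \<alpha> (g i) (s i) (P i))"
  shows "equidec \<alpha> A B"
proof -
  obtain h where h: "bij_betw h {..<card I} I"
    using ex_bij_betw_nat_finite[OF assms(1)] by (auto simp: atLeast0LessThan)
  then have "inj_on h {..<card I}" "h ` {..<card I} = I"
    by (auto simp: bij_betw_def)
  then have reindex: "disjoint_family_on (F \<circ> h) {..<card I}"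
    if "disjoint_family_on F I" for F :: "_ \<Rightarrow> ('x \<times> nat) set"
  proof (unfold disjoint_family_on_def, intro ballI impI)
    fix m n assume "m \<in> {..<card I}" "n \<in> {..<card I}" "m \<noteq> n"
    then have "h m \<noteq> h n" "h m \<in> I" "h n \<in> I"
      using \<open>inj_on h {..<card I}\<close> \<open>h ` {..<card I} = I\<close> by (auto dest: inj_onD)
    then show "(F \<circ> h) m \<inter> (F \<circ> h) n = {}"
      using disjoint_family_onD[OF that] by simp
  qed
  have UN_reindex: "(\<Union>i<card I. F (h i)) = (\<Union>i\<in>I. F i)" for F :: "_ \<Rightarrow> ('x \<times> nat) set"
    using \<open>h ` {..<card I} = I\<close> by (metis image_image)
  have "h i \<in> I" if "i < card I" for i
    using \<open>h ` {..<card I} = I\<close> that by blast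
  then show ?thesis
    unfolding equidec_def using assms reindex[OF assms(4)] reindex[OF assms(5)]
      UN_reindex[of P] UN_reindex[of "\<lambda>i. tact \<alpha> (g i) (s i) (P i)"]
    by (intro exI[of _ "card I"] exI[of _ "P \<circ> h"] exI[of _ "g \<circ> h"] exI[of _ "s \<circ> h"])
      (simp add: comp_def)
qed

lemma equidecE:
  assumes "equidec \<alpha> A B"
  obtains n and P :: "nat \<Rightarrow> ('x::topological_space \<times> nat) set" and g and s where
    "\<And>i. i < n \<Longrightarrow> clopen_set (P i)" "\<And>i. i < n \<Longrightarrow> bij (s i)"
    "disjoint_family_on P {..<n}" "disjoint_family_on (\<lambda>i. tact \<alpha> (g i) (s i) (P i)) {..<n}"
    "A = (\<Union>i<n. P i)" "B = (\<Union>i<n. tact \<alpha> (g i) (s i) (P i))"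
  using assms unfolding equidec_def by blast

locale continuous_action =
  fixes \<alpha> :: "'g::group_add \<Rightarrow> 'x::topological_space \<Rightarrow> 'x"
  assumes action_zero: "\<alpha> 0 = id"
    and action_add: "\<And>g h. \<alpha> (g + h) = \<alpha> g \<circ> \<alpha> h"
    and continuous_on_action: "\<And>g. continuous_on UNIV (\<alpha> g)"
begin

lemma action_minus_left [simp]: "\<alpha> (- g) (\<alpha> g x) = x"
  by (metis action_add action_zero comp_apply id_apply left_minus)

lemma action_minus_right [simp]: "\<alpha> g (\<alpha> (- g) x) = x"
  by (metis action_add action_zero comp_apply id_apply right_minus)

lemma continuous_on_tact_map: "continuous_on UNIV (tact_map \<alpha> g \<sigma>)"
proof -
  have "tact_map \<alpha> g \<sigma> = (\<lambda>y. (\<alpha> g (fst y), \<sigma> (snd y)))"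
    by (auto simp: tact_map_def)
  moreover have "continuous_on UNIV (\<lambda>y::'x \<times> nat. \<sigma> (snd y))"
    by (rule continuous_on_compose2[of UNIV \<sigma>]) (auto intro: continuous_intros)
  ultimately show ?thesis
    by (auto intro!: continuous_on_Pair continuous_on_compose2[OF continuous_on_action]
        intro: continuous_intros)
qed

lemma tact_tact: "tact \<alpha> h \<tau> (tact \<alpha> g \<sigma> P) = tact \<alpha> (h + g) (\<tau> \<circ> \<sigma>) P"
  by (force simp: tact_eq_image action_add)

lemma tact_zero_id: "tact \<alpha> 0 id P = P"
  by (simp add: tact_def action_zero)

lemma tact_inverse: "bij \<sigma> \<Longrightarrow> tact \<alpha> (- g) (inv \<sigma>) (tact \<alpha> g \<sigma> P) = P"
  by (simp add: tact_tact bij_is_inj tact_zero_id)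

lemma tact_zero_Times: "tact \<alpha> 0 \<sigma> (E \<times> K) = E \<times> \<sigma> ` K"
  by (auto simp: tact_def action_zero)

lemma inj_tact_map: "bij \<sigma> \<Longrightarrow> inj (tact_map \<alpha> g \<sigma>)"
  by (auto intro!: injI simp: tact_map_def bij_is_inj inj_eq split: prod.splits)
    (metis action_minus_left)

lemma tact_Int: "bij \<sigma> \<Longrightarrow> tact \<alpha> g \<sigma> (P \<inter> Q) = tact \<alpha> g \<sigma> P \<inter> tact \<alpha> g \<sigma> Q"
  by (simp add: tact_eq_image image_Int inj_tact_map)

lemma tact_eq_vimage:
  assumes "bij \<sigma>"
  shows "tact \<alpha> g \<sigma> P = tact_map \<alpha> (- g) (inv \<sigma>) -` P"
proof (intro equalityI subsetI)
  fix y
  assume "y \<in> tact \<alpha> g \<sigma> P"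
  then show "y \<in> tact_map \<alpha> (- g) (inv \<sigma>) -` P"
    using assms by (auto simp: tact_eq_image bij_is_inj)
next
  fix y
  assume "y \<in> tact_map \<alpha> (- g) (inv \<sigma>) -` P"
  moreover have "tact_map \<alpha> g \<sigma> (tact_map \<alpha> (- g) (inv \<sigma>) y) = y"
    using assms by (cases y) (simp add: bij_is_surj surj_f_inv_f)
  ultimately show "y \<in> tact \<alpha> g \<sigma> P"
    by (metis tact_eq_image image_eqI vimageE)
qed

lemma clopen_set_tact: "clopen_set P \<Longrightarrow> bij \<sigma> \<Longrightarrow> clopen_set (tact \<alpha> g \<sigma> P)"
  by (simp add: tact_eq_vimage clopen_set_vimage continuous_on_tact_map)

lemma count_fn_tact: "bij \<sigma> \<Longrightarrow> count_fn (tact \<alpha> g \<sigma> P) x = count_fn P (\<alpha> (- g) x)"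
proof -
  assume "bij \<sigma>"
  then have "{n. (x, n) \<in> tact \<alpha> g \<sigma> P} = \<sigma> ` {k. (\<alpha> (- g) x, k) \<in> P}"
    by (simp add: tact_eq_vimage bij_image_Collect_eq)
  then show ?thesis
    using card_image[OF inj_on_subset[OF bij_is_inj[OF \<open>bij \<sigma>\<close>] subset_UNIV]]
    by (simp add: count_fn_def)
qed

lemma equidec_tact: "clopen_set P \<Longrightarrow> bij \<sigma> \<Longrightarrow> equidec \<alpha> P (tact \<alpha> g \<sigma> P)"
  by (rule equidecI[of "{()}" "\<lambda>_. P" "\<lambda>_. \<sigma>" _ "\<lambda>_. g"]) (auto simp: disjoint_family_on_def)

lemma equidec_refl: "clopen_set P \<Longrightarrow> equidec \<alpha> P P"
  using equidec_tact[of P id 0] by (simp add: tact_zero_id)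

lemma equidec_sym:
  assumes "equidec \<alpha> A B"
  shows "equidec \<alpha> B A"
  using assms
proof (rule equidecE)
  fix n :: nat and P s g
  assume P: "\<And>i. i < n \<Longrightarrow> clopen_set (P i)" and s: "\<And>i. i < n \<Longrightarrow> bij (s i)"
    and "disjoint_family_on P {..<n}" "disjoint_family_on (\<lambda>i. tact \<alpha> (g i) (s i) (P i)) {..<n}"
    and "A = (\<Union>i<n. P i)" "B = (\<Union>i<n. tact \<alpha> (g i) (s i) (P i))"
  moreover have "tact \<alpha> (- g i) (inv (s i)) (tact \<alpha> (g i) (s i) (P i)) = P i" if "i < n" for i
    using s that by (simp add: tact_inverse)
  ultimately show ?thesis
    by (intro equidecI[of "{..<n}" "\<lambda>i. tact \<alpha> (g i) (s i) (P i)" "\<lambda>i. inv (s i)" _ "\<lambda>i. - g i"])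
      (auto simp: clopen_set_tact bij_imp_bij_inv disjoint_family_on_def)
qed

lemma equidec_Un:
  assumes "equidec \<alpha> A B" "equidec \<alpha> C D" "A \<inter> C = {}" "B \<inter> D = {}"
  shows "equidec \<alpha> (A \<union> C) (B \<union> D)"
proof -
  obtain n :: nat and P g s where P: "\<And>i. i < n \<Longrightarrow> clopen_set (P i)" "\<And>i. i < n \<Longrightarrow> bij (s i)"
    "disjoint_family_on P {..<n}" "disjoint_family_on (\<lambda>i. tact \<alpha> (g i) (s i) (P i)) {..<n}"
    "A = (\<Union>i<n. P i)" "B = (\<Union>i<n. tact \<alpha> (g i) (s i) (P i))"
    using assms(1) by (rule equidecE) blast
  obtain m :: nat and Q h t where Q: "\<And>j. j < m \<Longrightarrow> clopen_set (Q j)" "\<And>j. j < m \<Longrightarrow> bij (t j)"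
    "disjoint_family_on Q {..<m}" "disjoint_family_on (\<lambda>j. tact \<alpha> (h j) (t j) (Q j)) {..<m}"
    "C = (\<Union>j<m. Q j)" "D = (\<Union>j<m. tact \<alpha> (h j) (t j) (Q j))"
    using assms(2) by (rule equidecE) blast
  have "(\<lambda>i. tact \<alpha> (case_sum g h i) (case_sum s t i) (case_sum P Q i))
      = case_sum (\<lambda>i. tact \<alpha> (g i) (s i) (P i)) (\<lambda>j. tact \<alpha> (h j) (t j) (Q j))"
    by (rule ext) (simp split: sum.split)
  then show ?thesis
    using P Q assms(3,4)
    by (intro equidecI[of "{..<n} <+> {..<m}" "case_sum P Q" "case_sum s t" _ "case_sum g h"])
      (auto intro!: disjoint_family_on_case_sum)
qed

lemma disjoint_family_on_composed_pieces:
  assumes "disjoint_family_on (\<lambda>i. tact \<alpha> (g i) (s i) (P i)) I"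
    and "disjoint_family_on (\<lambda>j. tact \<alpha> (h j) (t j) (Q j)) J" "\<And>j. j \<in> J \<Longrightarrow> bij (t j)"
  shows "disjoint_family_on (\<lambda>(i, j). tact \<alpha> (h j) (t j) (tact \<alpha> (g i) (s i) (P i) \<inter> Q j)) (I \<times> J)"
proof (rule disjoint_family_on_prodI, unfold prod.case)
  fix i j i' j'
  assume ij: "i \<in> I" "i' \<in> I" "j \<in> J" "j' \<in> J" "(i, j) \<noteq> (i', j')"
  show "tact \<alpha> (h j) (t j) (tact \<alpha> (g i) (s i) (P i) \<inter> Q j) \<inter>
      tact \<alpha> (h j') (t j') (tact \<alpha> (g i') (s i') (P i') \<inter> Q j') = {}"
  proof (cases "j = j'")
    case True
    then have "i \<noteq> i'"
      using ij(5) by simp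
    then have "tact \<alpha> (g i) (s i) (P i) \<inter> tact \<alpha> (g i') (s i') (P i') = {}"
      using disjoint_family_onD[OF assms(1)] ij(1,2) by blast
    then have "tact \<alpha> (h j) (t j)
        ((tact \<alpha> (g i) (s i) (P i) \<inter> Q j) \<inter> (tact \<alpha> (g i') (s i') (P i') \<inter> Q j)) = {}"
      by (auto simp: tact_eq_image)
    then show ?thesis
      using True assms(3)[OF ij(3)] by (simp add: tact_Int)
  next
    case False
    then have "tact \<alpha> (h j) (t j) (Q j) \<inter> tact \<alpha> (h j') (t j') (Q j') = {}"
      using disjoint_family_onD[OF assms(2)] ij by auto
    then show ?thesis
      by (auto simp: tact_eq_image)
  qed
qed

lemma equidec_trans:
  assumes "equidec \<alpha> A B" "equidec \<alpha> B C"
  shows "equidec \<alpha> A C"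
proof -
  obtain n :: nat and P g s where P: "\<And>i. i < n \<Longrightarrow> clopen_set (P i)" "\<And>i. i < n \<Longrightarrow> bij (s i)"
    "disjoint_family_on P {..<n}" "disjoint_family_on (\<lambda>i. tact \<alpha> (g i) (s i) (P i)) {..<n}"
    "A = (\<Union>i<n. P i)" "B = (\<Union>i<n. tact \<alpha> (g i) (s i) (P i))"
    using assms(1) by (rule equidecE) blast
  obtain m :: nat and Q h t where Q: "\<And>j. j < m \<Longrightarrow> clopen_set (Q j)" "\<And>j. j < m \<Longrightarrow> bij (t j)"
    "disjoint_family_on Q {..<m}" "disjoint_family_on (\<lambda>j. tact \<alpha> (h j) (t j) (Q j)) {..<m}"
    "B = (\<Union>j<m. Q j)" "C = (\<Union>j<m. tact \<alpha> (h j) (t j) (Q j))"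
    using assms(2) by (rule equidecE) blast
  define R where "R = (\<lambda>(i, j). P i \<inter> tact_map \<alpha> (g i) (s i) -` Q j)"
  define E where "E = (\<lambda>(i, j). tact \<alpha> (h j) (t j) (tact \<alpha> (g i) (s i) (P i) \<inter> Q j))"
  define G where "G = (\<lambda>(i, j). h j + g i)"
  define T where "T = (\<lambda>(i, j). t j \<circ> s i)"
  have E_eq: "(\<lambda>ij. tact \<alpha> (G ij) (T ij) (R ij)) = E"
    by (rule ext) (simp add: R_def E_def G_def T_def split: prod.split flip: tact_tact tact_Int_vimage)
  have R_clopen: "clopen_set (R (i, j))" if "i < n" "j < m" for i j
    using P(1) Q(1) that by (simp add: R_def clopen_set_Int clopen_set_vimage continuous_on_tact_map)
  have E_disjoint: "disjoint_family_on E ({..<n} \<times> {..<m})"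
    unfolding E_def using P(4) Q(2,4) by (intro disjoint_family_on_composed_pieces) auto
  have R_disjoint: "disjoint_family_on R ({..<n} \<times> {..<m})"
    using disjoint_family_onD[OF P(3)] disjoint_family_onD[OF Q(3)]
    by (intro disjoint_family_on_prodI) (fastforce simp: R_def)
  have A_eq: "A = (\<Union>ij\<in>{..<n} \<times> {..<m}. R ij)"
  proof -
    have "P i \<inter> tact_map \<alpha> (g i) (s i) -` B = P i" if "i < n" for i
      using P(6) that by (auto simp: tact_eq_image)
    then have "A = (\<Union>i<n. P i \<inter> tact_map \<alpha> (g i) (s i) -` B)"
      using P(5) by simp
    also have "\<dots> = (\<Union>ij\<in>{..<n} \<times> {..<m}. R ij)"
      unfolding Q(5) R_def by blast
    finally show ?thesis .
  qed
  have C_eq: "C = (\<Union>ij\<in>{..<n} \<times> {..<m}. E ij)"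
  proof -
    have "B \<inter> Q j = Q j" if "j < m" for j
      using Q(5) that by auto
    then have "C = (\<Union>j<m. tact \<alpha> (h j) (t j) (B \<inter> Q j))"
      using Q(6) by simp
    also have "\<dots> = (\<Union>ij\<in>{..<n} \<times> {..<m}. E ij)"
      unfolding P(6) E_def tact_eq_image by blast
    finally show ?thesis .
  qed
  show ?thesis
  proof (rule equidecI[of "{..<n} \<times> {..<m}" R T _ G])
    show "disjoint_family_on (\<lambda>ij. tact \<alpha> (G ij) (T ij) (R ij)) ({..<n} \<times> {..<m})"
      unfolding E_eq by (fact E_disjoint)
    show "C = (\<Union>ij\<in>{..<n} \<times> {..<m}. tact \<alpha> (G ij) (T ij) (R ij))"
      unfolding E_eq by (fact C_eq)
  qed (use R_clopen R_disjoint A_eq P(2) Q(2) in \<open>auto simp: T_def intro!: bij_comp\<close>)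
qed

lemma equidec_imp_count_fn_diff_coboundary:
  assumes "equidec \<alpha> A B" "finite (snd ` A)" "finite (snd ` B)"
  shows "(\<lambda>x. count_fn A x - count_fn B x) \<in> coboundaries \<alpha>"
  using assms(1)
proof (rule equidecE)
  fix n :: nat and P g s
  assume P: "\<And>i. i < n \<Longrightarrow> clopen_set (P i)" and s: "\<And>i. i < n \<Longrightarrow> bij (s i)"
    and disj: "disjoint_family_on P {..<n}" "disjoint_family_on (\<lambda>i. tact \<alpha> (g i) (s i) (P i)) {..<n}"
    and AB: "A = (\<Union>i<n. P i)" "B = (\<Union>i<n. tact \<alpha> (g i) (s i) (P i))"
  have "P i \<subseteq> A" "tact \<alpha> (g i) (s i) (P i) \<subseteq> B" if "i < n" for i
    using AB that by auto
  then have fin: "finite (snd ` P i)" "finite (snd ` tact \<alpha> (g i) (s i) (P i))" if "i < n" for i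
    using assms(2,3) that by (meson finite_subset image_mono)+
  have "count_fn A x - count_fn B x = (\<Sum>i<n. count_fn (P i) x - count_fn (P i) (\<alpha> (- g i) x))" for x
    using count_fn_UN[OF _ disj(1), of x] count_fn_UN[OF _ disj(2), of x] fin s AB
    by (simp add: count_fn_tact sum_subtractf)
  moreover have "continuous_on UNIV (count_fn (P i))" if "i < n" for i
    using P fin that by (simp add: continuous_on_count_fn)
  ultimately show ?thesis
    unfolding coboundaries_def
    by (auto intro!: exI[of _ n] exI[of _ "\<lambda>i. count_fn (P i)"] exI[of _ "\<lambda>i. - g i"])
qed

lemma equidec_staircase_count_fn:
  assumes "bounded_clopen A"
  shows "equidec \<alpha> A (staircase (count_fn A))"
proof -
  obtain N where N: "\<And>x n. (x, n) \<in> A \<Longrightarrow> n < N"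
    using assms unfolding bounded_clopen_def by blast
  define L where "L x = {n. (x, n) \<in> A}" for x
  define X where "X S = {x. L x = S}" for S
  have L_Pow: "L x \<in> Pow {..<N}" for x
    using N by (auto simp: L_def)
  have X_clopen: "clopen_set (X S)" if "S \<subseteq> {..<N}" for S
  proof -
    have "L x = S \<longleftrightarrow> (\<forall>k<N. (x, k) \<in> A \<longleftrightarrow> k \<in> S)" for x
      using N that by (auto simp: L_def)
    then have "X S = (\<Inter>k<N. {x. (x, k) \<in> A \<longleftrightarrow> k \<in> S})"
      by (auto simp: X_def)
    moreover have "clopen_set {x. (x, k) \<in> A}" for k
      using assms by (simp add: bounded_clopen_def clopen_set_levels_iff)
    then have "clopen_set {x. (x, k) \<in> A \<longleftrightarrow> k \<in> S}" for k
      by (cases "k \<in> S") (simp_all add: Collect_neg_eq clopen_set_Compl)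
    ultimately show ?thesis
      by (simp add: clopen_set_INT)
  qed
  have "\<forall>S\<in>Pow {..<N}. \<exists>\<sigma>. bij \<sigma> \<and> \<sigma> ` S = {..<card S}"
    by (metis PowD card_lessThan ex_bij_image_eq finite_lessThan finite_subset)
  then obtain \<sigma> where \<sigma>: "\<And>S. S \<in> Pow {..<N} \<Longrightarrow> bij (\<sigma> S) \<and> \<sigma> S ` S = {..<card S}"
    by metis
  have image: "tact \<alpha> 0 (\<sigma> S) (X S \<times> S) = X S \<times> {..<card S}" if "S \<subseteq> {..<N}" for S
    using \<sigma> that by (simp add: tact_zero_Times)
  have X_disjoint: "X S \<inter> X S' = {}" if "S \<noteq> S'" for S S'
    using that by (auto simp: X_def)
  show ?thesis
  proof (rule equidecI[of "Pow {..<N}" "\<lambda>S. X S \<times> S" \<sigma> _ "\<lambda>_. 0"])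
    show "disjoint_family_on (\<lambda>S. tact \<alpha> 0 (\<sigma> S) (X S \<times> S)) (Pow {..<N})"
      unfolding disjoint_family_on_def by (simp add: image Times_Int_Times X_disjoint)
    have "staircase (count_fn A) = (\<Union>S\<in>Pow {..<N}. X S \<times> {..<card S})"
      using L_Pow by (auto simp: staircase_def count_fn_def X_def simp flip: L_def)
    also have "\<dots> = (\<Union>S\<in>Pow {..<N}. tact \<alpha> 0 (\<sigma> S) (X S \<times> S))"
      by (rule SUP_cong) (simp_all add: image)
    finally show "staircase (count_fn A) = (\<Union>S\<in>Pow {..<N}. tact \<alpha> 0 (\<sigma> S) (X S \<times> S))" .
  qed (use \<sigma> X_clopen L_Pow in \<open>auto simp: clopen_set_Times_discrete disjoint_family_on_def X_def L_def\<close>)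
qed

lemma equidec_of_count_fn_eq:
  assumes "bounded_clopen A" "bounded_clopen B" "count_fn A = count_fn B"
  shows "equidec \<alpha> A B"
  using equidec_staircase_count_fn[OF assms(1)] equidec_staircase_count_fn[OF assms(2)] assms(3)
  by (metis equidec_sym equidec_trans)

lemma equidec_shift_levels:
  assumes "bounded_clopen A"
  obtains A' where "equidec \<alpha> A A'" "bounded_clopen A'" "count_fn A' = count_fn A" "snd ` A' \<subseteq> {N..}"
proof -
  have "finite (snd ` A)" "clopen_set A"
    using assms by (simp_all add: bounded_clopen_iff)
  then obtain \<sigma> where \<sigma>: "bij \<sigma>" "\<sigma> ` snd ` A = {N..<N + card (snd ` A)}"
    using ex_bij_image_eq[of "snd ` A" "{N..<N + card (snd ` A)}"] by auto
  show ?thesis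
  proof (rule that[of "tact \<alpha> 0 \<sigma> A"])
    show "equidec \<alpha> A (tact \<alpha> 0 \<sigma> A)"
      using \<open>clopen_set A\<close> \<sigma> by (simp add: equidec_tact)
    show "bounded_clopen (tact \<alpha> 0 \<sigma> A)"
      using \<open>clopen_set A\<close> \<sigma> by (simp add: bounded_clopen_iff clopen_set_tact snd_tact)
    show "count_fn (tact \<alpha> 0 \<sigma> A) = count_fn A"
      using \<sigma> by (simp add: fun_eq_iff count_fn_tact action_zero)
    show "snd ` tact \<alpha> 0 \<sigma> A \<subseteq> {N..}"
      using \<sigma> by (auto simp: snd_tact)
  qed
qed

section \<open>Realising coboundaries\<close>

lemma coboundary_term_realization:
  assumes "compact (UNIV :: 'x set)" "continuous_on UNIV f"
  obtains S S' where "bounded_clopen S" "bounded_clopen S'" "equidec \<alpha> S S'" "snd ` (S \<union> S') \<subseteq> {N..}"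
    "\<And>x. count_fn S x - count_fn S' x = f x - f (\<alpha> g x)"
proof -
  have "bdd_above (abs ` range f)"
    using finite_range_continuous_int[OF assms] by (simp add: bdd_above_finite)
  then obtain K where K: "\<And>x. \<bar>f x\<bar> \<le> K"
    by (auto simp: bdd_above_def)
  define c where "c x = f x + K" for x
  have c_nonneg: "0 \<le> c x" and c_le: "c x \<le> int (nat (2 * K))" for x
    using K[of x] by (auto simp: c_def)
  have "continuous_on UNIV c"
    unfolding c_def using assms(2) by (intro continuous_intros)
  then have "bounded_clopen (staircase c)"
    using c_le by (rule bounded_clopen_staircase)
  then obtain S where S: "bounded_clopen S" "count_fn S = count_fn (staircase c)" "snd ` S \<subseteq> {N..}"
    by (metis equidec_shift_levels)
  have count_S: "count_fn S x = c x" for x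
    using S(2) count_fn_staircase[of c x] c_nonneg[of x] by simp
  define S' where "S' = tact \<alpha> (- g) id S"
  show ?thesis
  proof (rule that[of S S'])
    show "bounded_clopen S'" "equidec \<alpha> S S'"
      using S(1) by (simp_all add: S'_def bounded_clopen_iff clopen_set_tact equidec_tact snd_tact)
    show "snd ` (S \<union> S') \<subseteq> {N..}"
      using S(3) by (simp add: S'_def snd_tact image_Un)
    show "count_fn S x - count_fn S' x = f x - f (\<alpha> g x)" for x
      using count_S by (simp add: S'_def count_fn_tact c_def)
  qed (fact S(1))
qed

lemma coboundary_realization:
  assumes "compact (UNIV :: 'x set)" "h \<in> coboundaries \<alpha>"
  obtains Q R where "bounded_clopen Q" "bounded_clopen R" "equidec \<alpha> Q R" "snd ` (Q \<union> R) \<subseteq> {N..}"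
    "\<And>x. count_fn Q x - count_fn R x = h x"
proof -
  obtain n :: nat and f g where f: "\<forall>i<n. continuous_on UNIV (f i)"
    and h: "h = (\<lambda>x. \<Sum>i<n. f i x - f i (\<alpha> (g i) x))"
    using assms(2) unfolding coboundaries_def by blast
  have "\<exists>Q R. bounded_clopen Q \<and> bounded_clopen R \<and> equidec \<alpha> Q R \<and> snd ` (Q \<union> R) \<subseteq> {N..} \<and>
      (\<forall>x. count_fn Q x - count_fn R x = (\<Sum>i<m. f i x - f i (\<alpha> (g i) x)))" if "m \<le> n" for m
    using that
  proof (induction m)
    case 0
    show ?case
      by (intro exI[of _ "{}"]) (simp add: bounded_clopen_empty equidec_refl count_fn_def clopen_set_def)
  next
    case (Suc m)
    then obtain Q R where QR: "bounded_clopen Q" "bounded_clopen R" "equidec \<alpha> Q R" "snd ` (Q \<union> R) \<subseteq> {N..}"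
      "\<And>x. count_fn Q x - count_fn R x = (\<Sum>i<m. f i x - f i (\<alpha> (g i) x))"
      by auto
    obtain M where M: "snd ` (Q \<union> R) \<subseteq> {..<M}"
      using QR(1,2) finite_nat_bounded by (metis bounded_clopen_Un bounded_clopen_iff)
    obtain S S' where SS': "bounded_clopen S" "bounded_clopen S'" "equidec \<alpha> S S'"
      "snd ` (S \<union> S') \<subseteq> {max N M..}" "\<And>x. count_fn S x - count_fn S' x = f m x - f m (\<alpha> (g m) x)"
      using coboundary_term_realization[OF assms(1)] f Suc.prems by (metis Suc_le_lessD)
    have disjoint: "(Q \<union> R) \<inter> (S \<union> S') = {}"
      using M SS'(4) by (intro disjoint_if_levels_separated[of _ M]) auto
    have "Q \<inter> S = {}" "R \<inter> S' = {}"
      using disjoint by blast+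
    then have "count_fn (Q \<union> S) x - count_fn (R \<union> S') x = (\<Sum>i<Suc m. f i x - f i (\<alpha> (g i) x))" for x
      using QR(1,2) SS'(1,2) QR(5)[of x] SS'(5)[of x] by (simp add: count_fn_Un bounded_clopen_iff)
    moreover have "equidec \<alpha> (Q \<union> S) (R \<union> S')"
      using QR(3) SS'(3) \<open>Q \<inter> S = {}\<close> \<open>R \<inter> S' = {}\<close> by (rule equidec_Un)
    ultimately show ?case
      using QR(1,2,4) SS'(1,2,4)
      by (intro exI[of _ "Q \<union> S"] exI[of _ "R \<union> S'"]) (auto simp: bounded_clopen_Un)
  qed
  then show ?thesis
    using h that by blast
qed

section \<open>The type semigroup\<close>

lemma Teq_equiv: "equiv {A. bounded_clopen A} (Teq \<alpha>)"
proof (rule equivI)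
  show "refl_on {A. bounded_clopen A} (Teq \<alpha>)"
    by (rule refl_onI) (auto simp: Teq_def bounded_clopen_def intro: equidec_refl)
  show "sym (Teq \<alpha>)"
    by (rule symI) (auto simp: Teq_def intro: equidec_sym)
  show "trans (Teq \<alpha>)"
    by (rule transI) (auto simp: Teq_def intro: equidec_trans)
qed (auto simp: Teq_def)

lemma Teq_class_eq_iff:
  "bounded_clopen A \<Longrightarrow> bounded_clopen B \<Longrightarrow> Teq \<alpha> `` {A} = Teq \<alpha> `` {B} \<longleftrightarrow> equidec \<alpha> A B"
  using eq_equiv_class_iff[OF Teq_equiv] by (simp add: Teq_def)

lemma Tplus_Teq_classes:
  assumes "bounded_clopen A" "bounded_clopen B" "A \<inter> B = {}"
  shows "Tplus \<alpha> (Teq \<alpha> `` {A}) (Teq \<alpha> `` {B}) = Teq \<alpha> `` {A \<union> B}"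
proof (intro equalityI subsetI)
  fix D
  assume "D \<in> Tplus \<alpha> (Teq \<alpha> `` {A}) (Teq \<alpha> `` {B})"
  then obtain A' B' where "equidec \<alpha> A A'" "equidec \<alpha> B B'" "A' \<inter> B' = {}" "(A' \<union> B', D) \<in> Teq \<alpha>"
    unfolding Tplus_def Teq_def by blast
  then show "D \<in> Teq \<alpha> `` {A \<union> B}"
    using assms by (auto simp: Teq_def bounded_clopen_Un intro: equidec_Un equidec_trans)
next
  fix D
  assume "D \<in> Teq \<alpha> `` {A \<union> B}"
  moreover have "A \<in> Teq \<alpha> `` {A}" "B \<in> Teq \<alpha> `` {B}"
    using assms by (auto simp: Teq_def bounded_clopen_def intro: equidec_refl)
  ultimately show "D \<in> Tplus \<alpha> (Teq \<alpha> `` {A}) (Teq \<alpha> `` {B})"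
    unfolding Tplus_def using assms(3) by blast
qed

lemma Teq_class_disjoint_representative:
  assumes "bounded_clopen A" "bounded_clopen B"
  obtains B' where "bounded_clopen B'" "A \<inter> B' = {}" "Teq \<alpha> `` {B'} = Teq \<alpha> `` {B}"
proof -
  obtain N where "snd ` A \<subseteq> {..<N}"
    using assms(1) finite_nat_bounded by (metis bounded_clopen_iff)
  moreover obtain B' where "equidec \<alpha> B B'" "bounded_clopen B'" "snd ` B' \<subseteq> {N..}"
    using equidec_shift_levels[OF assms(2)] by metis
  ultimately show ?thesis
    using that assms(2) disjoint_if_levels_separated by (metis Teq_class_eq_iff equidec_sym)
qed

lemma T_cancellative_iff:
  "T_cancellative \<alpha> \<longleftrightarrow>
    (\<forall>A B C. bounded_clopen A \<longrightarrow> bounded_clopen B \<longrightarrow> bounded_clopen C \<longrightarrow>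
      A \<inter> B = {} \<longrightarrow> A \<inter> C = {} \<longrightarrow> equidec \<alpha> (A \<union> B) (A \<union> C) \<longrightarrow> equidec \<alpha> B C)"
  (is "_ \<longleftrightarrow> ?cancel")
proof
  assume cancel: "T_cancellative \<alpha>"
  show ?cancel
  proof (intro allI impI)
    fix A B C
    assume bc: "bounded_clopen A" "bounded_clopen B" "bounded_clopen C"
      and "A \<inter> B = {}" "A \<inter> C = {}" "equidec \<alpha> (A \<union> B) (A \<union> C)"
    then have "Tplus \<alpha> (Teq \<alpha> `` {A}) (Teq \<alpha> `` {B}) = Tplus \<alpha> (Teq \<alpha> `` {A}) (Teq \<alpha> `` {C})"
      by (simp add: Tplus_Teq_classes Teq_class_eq_iff bounded_clopen_Un)
    moreover have "Teq \<alpha> `` {X} \<in> Tsg \<alpha>" if "bounded_clopen X" for X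
      using that by (simp add: Tsg_def quotientI)
    ultimately have "Teq \<alpha> `` {B} = Teq \<alpha> `` {C}"
      using cancel bc unfolding T_cancellative_def by blast
    then show "equidec \<alpha> B C"
      using bc by (simp add: Teq_class_eq_iff)
  qed
next
  assume cancel: ?cancel
  show "T_cancellative \<alpha>"
    unfolding T_cancellative_def
  proof (intro ballI impI)
    fix a b c
    assume "a \<in> Tsg \<alpha>" "b \<in> Tsg \<alpha>" "c \<in> Tsg \<alpha>" and sums: "Tplus \<alpha> a b = Tplus \<alpha> a c"
    then obtain A B C where ABC: "bounded_clopen A" "bounded_clopen B" "bounded_clopen C"
      "A \<inter> B = {}" "A \<inter> C = {}" "a = Teq \<alpha> `` {A}" "b = Teq \<alpha> `` {B}" "c = Teq \<alpha> `` {C}"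
      unfolding Tsg_def by (elim quotientE) (metis Teq_class_disjoint_representative mem_Collect_eq)
    then have "equidec \<alpha> (A \<union> B) (A \<union> C)"
      using sums by (simp add: Tplus_Teq_classes Teq_class_eq_iff bounded_clopen_Un)
    then show "b = c"
      using cancel ABC by (simp add: Teq_class_eq_iff)
  qed
qed

lemma pi_injective_imp_T_cancellative:
  assumes "pi_injective \<alpha>"
  shows "T_cancellative \<alpha>"
  unfolding T_cancellative_iff
proof (intro allI impI)
  fix A B C
  assume bc: "bounded_clopen A" "bounded_clopen B" "bounded_clopen C"
    and disjoint: "A \<inter> B = {}" "A \<inter> C = {}" and "equidec \<alpha> (A \<union> B) (A \<union> C)"
  then have "(\<lambda>x. count_fn (A \<union> B) x - count_fn (A \<union> C) x) \<in> coboundaries \<alpha>"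
    by (simp add: equidec_imp_count_fn_diff_coboundary bounded_clopen_iff image_Un)
  also have "(\<lambda>x. count_fn (A \<union> B) x - count_fn (A \<union> C) x) = (\<lambda>x. count_fn B x - count_fn C x)"
    using bc disjoint by (simp add: count_fn_Un bounded_clopen_iff)
  finally show "equidec \<alpha> B C"
    using assms bc unfolding pi_injective_def by blast
qed

lemma T_cancellative_imp_pi_injective:
  assumes "compact (UNIV :: 'x set)" "T_cancellative \<alpha>"
  shows "pi_injective \<alpha>"
  unfolding pi_injective_def
proof (intro allI impI)
  fix A B
  assume bc: "bounded_clopen A" "bounded_clopen B"
    and "(\<lambda>x. count_fn A x - count_fn B x) \<in> coboundaries \<alpha>"
  obtain N where N: "snd ` (A \<union> B) \<subseteq> {..<N}"
    using bc finite_nat_bounded by (metis bounded_clopen_Un bounded_clopen_iff)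
  obtain Q R where QR: "bounded_clopen Q" "bounded_clopen R" "equidec \<alpha> Q R" "snd ` (Q \<union> R) \<subseteq> {N..}"
    "\<And>x. count_fn Q x - count_fn R x = count_fn A x - count_fn B x"
    by (rule coboundary_realization[OF assms(1) \<open>_ \<in> coboundaries \<alpha>\<close>, where N = N]) blast
  have "(A \<union> B) \<inter> (Q \<union> R) = {}"
    using disjoint_if_levels_separated[OF N QR(4)] .
  then have disjoint: "R \<inter> A = {}" "Q \<inter> B = {}" "R \<inter> B = {}"
    by blast+
  have "count_fn (R \<union> A) = count_fn (Q \<union> B)"
  proof
    fix x
    show "count_fn (R \<union> A) x = count_fn (Q \<union> B) x"
      using QR(5)[of x] bc QR(1,2) disjoint by (simp add: count_fn_Un bounded_clopen_iff)
  qed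
  then have "equidec \<alpha> (R \<union> A) (Q \<union> B)"
    using bc QR(1,2) by (simp add: equidec_of_count_fn_eq bounded_clopen_Un)
  moreover have "equidec \<alpha> (Q \<union> B) (R \<union> B)"
    using QR(3) bc(2) disjoint by (intro equidec_Un equidec_refl) (auto simp: bounded_clopen_def)
  ultimately have "equidec \<alpha> (R \<union> A) (R \<union> B)"
    by (rule equidec_trans)
  then show "equidec \<alpha> A B"
    using assms(2) bc QR(2) disjoint unfolding T_cancellative_iff by blast
qed

end

theorem mainTheorem10:
  fixes \<alpha> :: "'g::group_add \<Rightarrow> 'x::t2_space \<Rightarrow> 'x"
  assumes "countable (UNIV :: 'g set)"
    and "compact (UNIV :: 'x set)"
    and "\<forall>(U :: 'x set) x. open U \<and> x \<in> U \<longrightarrow> (\<exists>V. open V \<and> closed V \<and> x \<in> V \<and> V \<subseteq> U)"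
    and "\<alpha> 0 = id"
    and "\<forall>g h. \<alpha> (g + h) = \<alpha> g \<circ> \<alpha> h"
    and "\<forall>g. continuous_on UNIV (\<alpha> g)"
  shows "pi_injective \<alpha> \<longleftrightarrow> T_cancellative \<alpha>"
proof -
  interpret continuous_action \<alpha>
    using assms(4-6) by unfold_locales auto
  show ?thesis
    using pi_injective_imp_T_cancellative T_cancellative_imp_pi_injective[OF assms(2)] by blast
qed

end
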